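(* Let $H=B(1,3,3)$ and $G=H^2$. Then $G$ is equitably $4$-choosable.
   Context: For $m,l_1,\ldots,l_m\in\mathbb{N}$ with $l_1\le\cdots\le l_m$, $B(l_1,\ldots,l_m)$ is the graph with vertex set $\{u\}\cup\{v_{i,j}: i\in[m], j\in[l_i]\}$ in which, for each $i\in[m]$, consecutive vertices in the sequence $u, v_{i,1},\ldots,v_{i,l_i}$ are adjacent (and there are no other edges). For a graph $H$, $H^2$ has vertex set $V(H)$ with two vertices adjacent iff their distance in $H$ is 1 or 2. A $k$-assignment $L$ assigns to each vertex a set of exactly $k$ colors; an equitable $L$-coloring of $G$ is a proper coloring $f$ with $f(v)\in L(v)$ such that no color is used more than $\lceil |V(G)|/k\rceil$ times; $G$ is equitably $k$-choosable if it has an equitable $L$-coloring for every $k$-assignment $L$. *)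

theory Defs
  imports Main
begin

text \<open>The spider B(l_1,...,l_m), given by the list ls = [l_1,...,l_m]:
  the centre u is the pair (0,0), and v_{i,j} is the pair (i,j)
  for 1 <= i <= m and 1 <= j <= l_i.\<close>

definition B_verts :: "nat list \<Rightarrow> (nat \<times> nat) set" where
  "B_verts ls = {(0,0)} \<union>
     {(i,j). 1 \<le> i \<and> i \<le> length ls \<and> 1 \<le> j \<and> j \<le> ls ! (i - 1)}"

definition B_adj :: "nat list \<Rightarrow> (nat \<times> nat) \<Rightarrow> (nat \<times> nat) \<Rightarrow> bool" where
  "B_adj ls x y \<longleftrightarrow> x \<in> B_verts ls \<and> y \<in> B_verts ls \<and>
     ((x = (0,0) \<and> 1 \<le> fst y \<and> snd y = 1) \<or>
      (y = (0,0) \<and> 1 \<le> fst x \<and> snd x = 1) \<or>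
      (1 \<le> fst x \<and> fst x = fst y \<and> (snd y = snd x + 1 \<or> snd x = snd y + 1)))"

definition square_adj :: "'a set \<Rightarrow> ('a \<Rightarrow> 'a \<Rightarrow> bool) \<Rightarrow> 'a \<Rightarrow> 'a \<Rightarrow> bool" where
  "square_adj V E x y \<longleftrightarrow> x \<in> V \<and> y \<in> V \<and> x \<noteq> y \<and>
     (E x y \<or> (\<exists>z\<in>V. E x z \<and> E z y))"

definition k_assignment :: "'a set \<Rightarrow> ('a \<Rightarrow> 'c set) \<Rightarrow> nat \<Rightarrow> bool" where
  "k_assignment V L k \<longleftrightarrow> (\<forall>v\<in>V. finite (L v) \<and> card (L v) = k)"

definition equitable_L_coloring ::
  "'a set \<Rightarrow> ('a \<Rightarrow> 'a \<Rightarrow> bool) \<Rightarrow> ('a \<Rightarrow> 'c set) \<Rightarrow> nat \<Rightarrow> ('a \<Rightarrow> 'c) \<Rightarrow> bool" where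
  "equitable_L_coloring V E L k f \<longleftrightarrow>
     (\<forall>v\<in>V. f v \<in> L v) \<and>
     (\<forall>x\<in>V. \<forall>y\<in>V. E x y \<longrightarrow> f x \<noteq> f y) \<and>
     (\<forall>c. card {v \<in> V. f v = c} \<le> (card V + k - 1) div k)"

end

theory Submission
  imports Defs
begin

text \<open>Write u = (0,0), w = (1,1), x_j = (2,j) and y_j = (3,j). In the square G the vertices
  u, w, x1, y1 form a clique and x2-x3, y2-y3 are edges, so a colour class meets each
  of these three cliques at most once, and \<lceil>8/4\<rceil> = 2. Colour greedily in the order
  w, u, x1, y1, x2, x3, y2, y3, forbidding the colours of the earlier G-neighbours and,
  in addition, the colour of u at x3 and the colour of w at y2 and y3. No vertex ever has more
  than three forbidden colours, so its list of four always leaves a choice. A class meeting all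
  three cliques would have to contain w, u, x1 or y1 together with a vertex of each edge;
  the proper colouring excludes x1 and y1, and the extra exclusions rule out u and w.\<close>

lemma ex_notin_set_if_length_less_card:
  assumes "length xs < card A"
  shows "\<exists>x\<in>A. x \<notin> set xs"
proof (rule ccontr)
  assume "\<not> ?thesis"
  then have "card A \<le> card (set xs)" by (intro card_mono) auto
  with assms card_length[of xs] show False by simp
qed

lemma card_le_2_if_no_three_distinct:
  assumes "\<And>a b c. a \<in> S \<Longrightarrow> b \<in> S \<Longrightarrow> c \<in> S \<Longrightarrow> a \<noteq> b \<Longrightarrow> a \<noteq> c \<Longrightarrow> b \<noteq> c \<Longrightarrow> False"
  shows "card S \<le> 2"
proof (rule ccontr)
  assume "\<not> card S \<le> 2"
  then obtain T where "T \<subseteq> S" "card T = 3"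
    using obtain_subset_with_card_n[of 3 S] by auto
  then obtain a b c where "{a, b, c} \<subseteq> S" "a \<noteq> b" "a \<noteq> c" "b \<noteq> c"
    by (metis card_3_iff)
  then show False using assms by blast
qed

lemma B_verts_1_3_3: "B_verts [1,3,3] = {(0,0),(1,1),(2,1),(2,2),(2,3),(3,1),(3,2),(3,3)}"
proof -
  have "{(i,j). 1 \<le> i \<and> i \<le> length [1::nat,3,3] \<and> 1 \<le> j \<and> j \<le> [1::nat,3,3] ! (i - 1)}
      = {(1,1),(2,1),(2,2),(2,3),(3,1),(3,2),(3,3)}" (is "?A = ?B")
  proof
    show "?A \<subseteq> ?B"
    proof
      fix p assume "p \<in> ?A"
      then obtain i j where p: "p = (i,j)"
        and i: "1 \<le> i" "i \<le> 3" and j: "1 \<le> j" "j \<le> [1::nat,3,3] ! (i - 1)" by auto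
      from i have "i = 1 \<or> i = 2 \<or> i = 3" by auto
      moreover from this j have "j = 1 \<or> j = 2 \<or> j = 3" by auto
      ultimately show "p \<in> ?B" using j p by auto
    qed
  qed auto
  then show ?thesis unfolding B_verts_def by auto
qed

definition B_1_3_3_edges :: "(nat \<times> nat) set set" where
  "B_1_3_3_edges = {{(0,0),(1,1)}, {(0,0),(2,1)}, {(0,0),(3,1)},
     {(2,1),(2,2)}, {(2,2),(2,3)}, {(3,1),(3,2)}, {(3,2),(3,3)}}"

definition B_1_3_3_square_edges :: "(nat \<times> nat) set set" where
  "B_1_3_3_square_edges = B_1_3_3_edges \<union>
     {{(0,0),(2,2)}, {(0,0),(3,2)}, {(1,1),(2,1)}, {(1,1),(3,1)}, {(2,1),(3,1)},
      {(2,1),(2,3)}, {(3,1),(3,3)}}"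

lemma B_adj_1_3_3:
  assumes "B_adj [1,3,3] x y"
  shows "{x, y} \<in> B_1_3_3_edges"
proof -
  have "x \<in> B_verts [1,3,3]" "y \<in> B_verts [1,3,3]" using assms unfolding B_adj_def by auto
  then show ?thesis using assms unfolding B_adj_def B_verts_1_3_3 B_1_3_3_edges_def
    by simp (elim disjE; simp add: doubleton_eq_iff)
qed

lemma B_1_3_3_square_edges_if_path2:
  assumes "{x, z} \<in> B_1_3_3_edges" "{z, y} \<in> B_1_3_3_edges" "x \<noteq> y"
  shows "{x, y} \<in> B_1_3_3_square_edges"
  using assms unfolding B_1_3_3_square_edges_def B_1_3_3_edges_def
  by (simp only: insert_iff empty_iff Un_iff doubleton_eq_iff) (elim disjE conjE; simp)

lemma square_adj_B_1_3_3:
  assumes "square_adj (B_verts [1,3,3]) (B_adj [1,3,3]) x y"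
  shows "{x, y} \<in> B_1_3_3_square_edges"
proof -
  from assms consider "B_adj [1,3,3] x y"
    | z where "x \<noteq> y" "B_adj [1,3,3] x z" "B_adj [1,3,3] z y"
    unfolding square_adj_def by blast
  then show ?thesis
  proof cases
    case 1
    then show ?thesis by (simp add: B_1_3_3_square_edges_def B_adj_1_3_3)
  next
    case 2
    then show ?thesis by (intro B_1_3_3_square_edges_if_path2 B_adj_1_3_3)
  qed
qed

lemma equitable_L_coloring_B_1_3_3:
  assumes lists: "\<forall>v\<in>B_verts [1,3,3]. f v \<in> L v"
    and "distinct [f (1,1), f (0,0), f (2,1), f (3,1)]"
    and "f (2,2) \<notin> {f (0,0), f (2,1)}"
    and "f (2,3) \<notin> {f (0,0), f (2,1), f (2,2)}"
    and "f (3,2) \<notin> {f (1,1), f (0,0), f (3,1)}"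
    and "f (3,3) \<notin> {f (1,1), f (3,1), f (3,2)}"
  shows "equitable_L_coloring (B_verts [1,3,3])
           (square_adj (B_verts [1,3,3]) (B_adj [1,3,3])) L 4 f"
proof -
  have proper: "f x \<noteq> f y" if "{x, y} \<in> B_1_3_3_square_edges" for x y
    using that assms(2-6) unfolding B_1_3_3_square_edges_def B_1_3_3_edges_def
    by (simp only: insert_iff empty_iff Un_iff doubleton_eq_iff) (elim disjE conjE; auto)
  have "card {v \<in> B_verts [1,3,3]. f v = c} \<le> 2" for c
  proof (rule card_le_2_if_no_three_distinct)
    fix a b d
    assume "a \<in> {v \<in> B_verts [1,3,3]. f v = c}" "b \<in> {v \<in> B_verts [1,3,3]. f v = c}"
      "d \<in> {v \<in> B_verts [1,3,3]. f v = c}" "a \<noteq> b" "a \<noteq> d" "b \<noteq> d"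
    then show False using assms(2-6) unfolding B_verts_1_3_3
      by (simp only: mem_Collect_eq insert_iff empty_iff) (elim disjE conjE; simp)
  qed
  moreover have "card (B_verts [1,3,3]) = 8" unfolding B_verts_1_3_3 by simp
  ultimately show ?thesis unfolding equitable_L_coloring_def
    using lists proper square_adj_B_1_3_3 by auto
qed

theorem lemma2p7:
  fixes L :: "nat \<times> nat \<Rightarrow> 'c set"
  assumes "k_assignment (B_verts [1,3,3]) L 4"
  shows "\<exists>f. equitable_L_coloring (B_verts [1,3,3])
              (square_adj (B_verts [1,3,3]) (B_adj [1,3,3])) L 4 f"
proof -
  have avoid: "\<exists>c\<in>L v. c \<notin> set cs"
    if "v \<in> B_verts [1,3,3]" "length cs < 4" for v and cs :: "'c list"
    using that assms ex_notin_set_if_length_less_card unfolding k_assignment_def by metis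
  note avoid = avoid[unfolded B_verts_1_3_3]
  obtain cw where cw: "cw \<in> L (1,1)"
    using avoid[of "(1,1)" "[]"] by auto
  obtain cu where cu: "cu \<in> L (0,0)" "cu \<notin> {cw}"
    using avoid[of "(0,0)" "[cw]"] by auto
  obtain cx1 where cx1: "cx1 \<in> L (2,1)" "cx1 \<notin> {cw, cu}"
    using avoid[of "(2,1)" "[cw, cu]"] by auto
  obtain cy1 where cy1: "cy1 \<in> L (3,1)" "cy1 \<notin> {cw, cu, cx1}"
    using avoid[of "(3,1)" "[cw, cu, cx1]"] by auto
  obtain cx2 where cx2: "cx2 \<in> L (2,2)" "cx2 \<notin> {cu, cx1}"
    using avoid[of "(2,2)" "[cu, cx1]"] by auto
  obtain cx3 where cx3: "cx3 \<in> L (2,3)" "cx3 \<notin> {cu, cx1, cx2}"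
    using avoid[of "(2,3)" "[cu, cx1, cx2]"] by auto
  obtain cy2 where cy2: "cy2 \<in> L (3,2)" "cy2 \<notin> {cw, cu, cy1}"
    using avoid[of "(3,2)" "[cw, cu, cy1]"] by auto
  obtain cy3 where cy3: "cy3 \<in> L (3,3)" "cy3 \<notin> {cw, cy1, cy2}"
    using avoid[of "(3,3)" "[cw, cy1, cy2]"] by auto
  note colors = cw cu cx1 cy1 cx2 cx3 cy2 cy3
  define f :: "nat \<times> nat \<Rightarrow> 'c" where "f = (\<lambda>_. undefined)((0,0) := cu, (1,1) := cw,
    (2,1) := cx1, (2,2) := cx2, (2,3) := cx3, (3,1) := cy1, (3,2) := cy2, (3,3) := cy3)"
  have "equitable_L_coloring (B_verts [1,3,3])
          (square_adj (B_verts [1,3,3]) (B_adj [1,3,3])) L 4 f"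
  proof (rule equitable_L_coloring_B_1_3_3)
    show "\<forall>v\<in>B_verts [1,3,3]. f v \<in> L v"
      unfolding B_verts_1_3_3 using colors by (simp add: f_def)
  qed (use colors in \<open>auto simp: f_def\<close>)
  then show ?thesis by blast
qed

end
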